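(* Let $X$ be a $T_1$ space with $|X|<\mathfrak b$. Then $X$ is set strongly star Hurewicz if and only if $e(X)=\omega$.
   Context: For a family $\mathcal U$ of subsets of $X$ and $A\subseteq X$, $st(A,\mathcal U)=\bigcup\{U\in\mathcal U: U\cap A\neq\emptyset\}$. $X$ is set strongly star Hurewicz if for every nonempty $A\subseteq X$ and every sequence $(\mathcal U_n:n\in\omega)$ of families of open sets with $\overline A\subseteq\bigcup\mathcal U_n$ for all $n$, there are finite $F_n\subseteq\overline A$ such that each $x\in A$ lies in $st(F_n,\mathcal U_n)$ for all but finitely many $n$. $e(X)$ is the supremum of cardinalities of closed discrete subsets ($e(X)=\omega$ means all closed discrete subsets are countable). $\mathfrak b$ is the minimal cardinality of a $\leq^*$-unbounded subset of $\omega^\omega$. *)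

theory Defs
  imports "HOL-Analysis.Analysis"
begin

definition st :: "'a set \<Rightarrow> 'a set set \<Rightarrow> 'a set" where
  "st A \<U> = \<Union>{U \<in> \<U>. U \<inter> A \<noteq> {}}"

definition set_strongly_star_Hurewicz :: "'a topology \<Rightarrow> bool" where
  "set_strongly_star_Hurewicz X \<longleftrightarrow>
     (\<forall>A \<U>. A \<noteq> {} \<and> A \<subseteq> topspace X \<and>
        (\<forall>n. (\<forall>U\<in>\<U> n. openin X U) \<and> X closure_of A \<subseteq> \<Union>(\<U> n)) \<longrightarrow>
        (\<exists>F :: nat \<Rightarrow> 'a set. (\<forall>n. finite (F n) \<and> F n \<subseteq> X closure_of A) \<and>
           (\<forall>x\<in>A. \<forall>\<^sub>F n in sequentially. x \<in> st (F n) (\<U> n))))"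

text \<open>Closed discrete subsets; e(X) = omega means all of them are countable.\<close>
definition closed_discrete :: "'a topology \<Rightarrow> 'a set \<Rightarrow> bool" where
  "closed_discrete X D \<longleftrightarrow> closedin X D \<and> subtopology X D = discrete_topology D"

definition extent_countable :: "'a topology \<Rightarrow> bool" where
  "extent_countable X \<longleftrightarrow> (\<forall>D. closed_discrete X D \<longrightarrow> countable D)"

definition le_star :: "(nat \<Rightarrow> nat) \<Rightarrow> (nat \<Rightarrow> nat) \<Rightarrow> bool" where
  "le_star f g \<longleftrightarrow> (\<forall>\<^sub>F n in sequentially. f n \<le> g n)"

definition unbounded_family :: "(nat \<Rightarrow> nat) set \<Rightarrow> bool" where
  "unbounded_family F \<longleftrightarrow> \<not> (\<exists>g. \<forall>f\<in>F. le_star f g)"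

text \<open>|S| < b, where b = min{|F| : F unbounded}: S is strictly smaller than every unbounded family.\<close>
definition less_than_b :: "'a set \<Rightarrow> bool" where
  "less_than_b S \<longleftrightarrow> (\<forall>F. unbounded_family F \<longrightarrow> (card_of S, card_of F) \<in> ordLess)"

end

theory Submission
  imports Defs
begin

text \<open>In a \<open>T\<^sub>1\<close> space every open cover \<open>\<U>\<close> of a closed set \<open>C\<close> has a closed discrete
  kernel \<open>D \<subseteq> C\<close> with \<open>C \<subseteq> st D \<U>\<close>: a maximal subset of \<open>C\<close> no two points of which lie in a
  common member of \<open>\<U>\<close>. If \<open>e(X) = \<omega>\<close>, the kernels \<open>D\<^sub>n\<close> for \<open>\<U>\<^sub>n\<close> are countable; enumerating
  them, each \<open>x \<in> A\<close> gives the function sending \<open>n\<close> to the least index of a point of \<open>D\<^sub>n\<close> that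
  shares a member of \<open>\<U>\<^sub>n\<close> with \<open>x\<close>. Fewer than \<open>\<bb>\<close> such functions are dominated by a single
  \<open>g\<close>, and the first \<open>g(n)\<close> points of \<open>D\<^sub>n\<close> form \<open>F\<^sub>n\<close>.
  Conversely, isolate the points of a closed discrete set \<open>D\<close> by open sets \<open>V\<^sub>d\<close> and use the
  constant cover \<open>{V\<^sub>d}\<close>: a star of \<open>F \<subseteq> D\<close> meets \<open>D\<close> only in \<open>F\<close>, so every point of \<open>D\<close> is
  eventually in the finite sets \<open>F\<^sub>n\<close>, and \<open>D\<close> is countable.\<close>

lemma closed_discrete_iff_derived_set_empty:
  "closed_discrete X D \<longleftrightarrow> D \<subseteq> topspace X \<and> X derived_set_of D = {}"
  unfolding closed_discrete_def closedin_contains_derived_set subtopology_eq_discrete_topology_eq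
  by blast

lemma closed_discrete_isolating_open:
  assumes "closed_discrete X D" and "d \<in> D"
  obtains U where "openin X U" and "U \<inter> D = {d}"
proof -
  have "d \<in> topspace X" "d \<notin> X derived_set_of D"
    using assms by (auto simp: closed_discrete_iff_derived_set_empty)
  then obtain U where "openin X U" "d \<in> U" "\<And>y. y \<in> D \<Longrightarrow> y \<in> U \<Longrightarrow> y = d"
    by (auto simp: in_derived_set_of)
  with \<open>d \<in> D\<close> show thesis
    using that by blast
qed

lemma st_UN_singletons: "st F \<U> = (\<Union>y\<in>F. st {y} \<U>)"
  unfolding st_def by auto

lemma st_mono: "F \<subseteq> G \<Longrightarrow> st F \<U> \<subseteq> st G \<U>"
  unfolding st_def by blast

lemma st_isolating_family_Int:
  assumes V: "\<And>d. d \<in> D \<Longrightarrow> V d \<inter> D = {d}" and "F \<subseteq> D"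
  shows "D \<inter> st F (V ` D) \<subseteq> F"
proof
  fix x assume "x \<in> D \<inter> st F (V ` D)"
  then obtain d y where "d \<in> D" "x \<in> D" "x \<in> V d" "y \<in> V d" "y \<in> F"
    unfolding st_def by blast
  with V[of d] \<open>F \<subseteq> D\<close> have "x = d" "y = d"
    by blast+
  with \<open>y \<in> F\<close> show "x \<in> F"
    by simp
qed

lemma countable_if_eventually_in_finite:
  assumes "\<And>n. finite (F n)" and "\<forall>x\<in>D. \<forall>\<^sub>F n in sequentially. x \<in> F n"
  shows "countable D"
proof (rule countable_subset)
  show "D \<subseteq> (\<Union>m. \<Inter>n\<in>{m..}. F n)"
    using assms(2) by (fastforce simp: eventually_sequentially)
  have "finite (\<Inter>n\<in>{m..}. F n)" for m
    using assms(1)[of m] by (rule finite_subset[rotated]) auto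
  then show "countable (\<Union>m. \<Inter>n\<in>{m..}. F n)"
    by (simp add: countable_finite)
qed

lemma set_strongly_star_Hurewicz_imp_extent_countable:
  assumes "set_strongly_star_Hurewicz X"
  shows "extent_countable X"
  unfolding extent_countable_def
proof (intro allI impI)
  fix D assume D: "closed_discrete X D"
  show "countable D"
  proof (cases "D = {}")
    case False
    have "\<forall>d\<in>D. \<exists>U. openin X U \<and> U \<inter> D = {d}"
      using closed_discrete_isolating_open[OF D] by metis
    then obtain V where V: "\<And>d. d \<in> D \<Longrightarrow> openin X (V d) \<and> V d \<inter> D = {d}"
      by metis
    have "D \<subseteq> topspace X" and "X closure_of D = D"
      using D by (auto simp: closed_discrete_def closedin_subset closure_of_closedin)
    with False V obtain F where F: "\<And>n. finite (F n) \<and> F n \<subseteq> D"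
      and ev: "\<forall>x\<in>D. \<forall>\<^sub>F n in sequentially. x \<in> st (F n) (V ` D)"
      using assms[unfolded set_strongly_star_Hurewicz_def, rule_format, of D "\<lambda>_. V ` D"]
      by auto
    have "\<forall>x\<in>D. \<forall>\<^sub>F n in sequentially. x \<in> F n"
      using ev st_isolating_family_Int[of D V, OF _ conjunct2[OF F]] V
      by (blast intro: eventually_mono)
    with F show ?thesis
      by (intro countable_if_eventually_in_finite[of F]) blast+
  qed simp
qed

lemma unlinked_subset_closed_discrete:
  assumes "t1_space X" and "closedin X C"
    and "\<forall>U\<in>\<U>. openin X U" and "C \<subseteq> \<Union>\<U>"
    and "M \<subseteq> C" and unlinked: "pairwise (\<lambda>x y. \<forall>U\<in>\<U>. x \<notin> U \<or> y \<notin> U) M"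
  shows "closed_discrete X M"
  unfolding closed_discrete_iff_derived_set_empty
proof
  show "M \<subseteq> topspace X"
    using \<open>M \<subseteq> C\<close> closedin_subset[OF \<open>closedin X C\<close>] by (rule subset_trans)
  show "X derived_set_of M = {}"
  proof (rule equals0I)
    fix z assume z: "z \<in> X derived_set_of M"
    have "X derived_set_of M \<subseteq> C"
      using derived_set_of_mono[OF \<open>M \<subseteq> C\<close>] \<open>closedin X C\<close>
      by (auto simp: closedin_contains_derived_set)
    with z \<open>C \<subseteq> \<Union>\<U>\<close> obtain U where "U \<in> \<U>" "z \<in> U"
      by blast
    have "finite (U \<inter> M)"
    proof (cases "U \<inter> M = {}")
      case False
      then obtain a where "a \<in> U \<inter> M"
        by blast
      with unlinked \<open>U \<in> \<U>\<close> have "U \<inter> M \<subseteq> {a}"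
        unfolding pairwise_def by blast
      then show ?thesis
        by (rule finite_subset) simp
    qed simp
    then have "X derived_set_of (U \<inter> M) = {}"
      using \<open>t1_space X\<close> t1_space_derived_set_of_finite by blast
    moreover have "z \<in> X derived_set_of (U \<inter> M)"
      using openin_Int_derived_set_of_subset[of X U M] assms(3) \<open>U \<in> \<U>\<close> \<open>z \<in> U\<close> z
      by blast
    ultimately show False
      by blast
  qed
qed

lemma closed_discrete_star_kernel:
  assumes "t1_space X" and "closedin X C"
    and "\<forall>U\<in>\<U>. openin X U" and "C \<subseteq> \<Union>\<U>"
  obtains D where "D \<subseteq> C" and "C \<subseteq> st D \<U>" and "closed_discrete X D"
proof -
  define unlinked where "unlinked = pairwise (\<lambda>x y. \<forall>U\<in>\<U>. x \<notin> U \<or> y \<notin> U)"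
  have "\<Union>\<C> \<in> {M. M \<subseteq> C \<and> unlinked M}" if "\<C> \<in> chains {M. M \<subseteq> C \<and> unlinked M}" for \<C>
  proof -
    have "\<C> \<subseteq> {M. M \<subseteq> C \<and> unlinked M}" and "chain\<^sub>\<subseteq> \<C>"
      using that unfolding chains_def by auto
    moreover from this have "unlinked (\<Union>\<C>)"
      unfolding unlinked_def by (intro pairwise_chain_Union) auto
    ultimately show ?thesis
      by blast
  qed
  then obtain M where "M \<in> {M. M \<subseteq> C \<and> unlinked M}"
    and maximal: "\<forall>N\<in>{M. M \<subseteq> C \<and> unlinked M}. M \<subseteq> N \<longrightarrow> N = M"
    using Zorn_Lemma[of "{M. M \<subseteq> C \<and> unlinked M}"] by auto
  then have M: "M \<subseteq> C" "unlinked M"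
    by auto
  have "C \<subseteq> st M \<U>"
  proof
    fix z assume "z \<in> C"
    show "z \<in> st M \<U>"
    proof (rule ccontr)
      assume z: "z \<notin> st M \<U>"
      then have "unlinked (insert z M)"
        using M(2) unfolding unlinked_def st_def pairwise_insert by auto
      then have "z \<in> M"
        using maximal M(1) \<open>z \<in> C\<close> by blast
      with z \<open>z \<in> C\<close> assms(4) show False
        unfolding st_def by blast
    qed
  qed
  moreover have "closed_discrete X M"
    using unlinked_subset_closed_discrete[OF assms M(1)] M(2) unfolding unlinked_def .
  ultimately show thesis
    using that M(1) by blast
qed

lemma less_than_b_bounded:
  assumes "less_than_b S" and "A \<subseteq> S"
  obtains g where "\<forall>x\<in>A. le_star (f x) g"
proof -
  have small: "(card_of (f ` A), card_of S) \<in> ordLeq"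
    by (rule ordLeq_transitive[OF card_of_image card_of_mono1[OF assms(2)]])
  have "\<not> unbounded_family (f ` A)"
  proof
    assume "unbounded_family (f ` A)"
    with assms(1) have "(card_of S, card_of (f ` A)) \<in> ordLess"
      unfolding less_than_b_def by blast
    with small show False
      by (simp add: not_ordLess_ordLeq)
  qed
  then show thesis
    unfolding unbounded_family_def using that by auto
qed

lemma finite_star_selection:
  assumes "less_than_b S" and "A \<subseteq> S"
    and "\<And>n. countable (D n)" and "\<And>n. A \<subseteq> st (D n) (\<U> n)"
  shows "\<exists>F. (\<forall>n. finite (F n) \<and> F n \<subseteq> D n) \<and>
           (\<forall>x\<in>A. \<forall>\<^sub>F n in sequentially. x \<in> st (F n) (\<U> n))"
proof -
  define idx where "idx n = to_nat_on (D n)" for n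
  define f where "f x n = (LEAST k. \<exists>y\<in>D n. idx n y = k \<and> x \<in> st {y} (\<U> n))" for x n
  have f: "\<exists>y\<in>D n. idx n y = f x n \<and> x \<in> st {y} (\<U> n)" if "x \<in> A" for x n
  proof -
    have "\<exists>y\<in>D n. x \<in> st {y} (\<U> n)"
      using that assms(4)[of n] st_UN_singletons[of "D n" "\<U> n"] by blast
    then have "\<exists>k. \<exists>y\<in>D n. idx n y = k \<and> x \<in> st {y} (\<U> n)"
      by blast
    then show ?thesis
      unfolding f_def by (rule LeastI_ex)
  qed
  obtain g where g: "\<forall>x\<in>A. le_star (f x) g"
    by (rule less_than_b_bounded[OF assms(1,2)])
  define F where "F n = idx n -` {..g n} \<inter> D n" for n
  have "finite (F n)" for n
    unfolding F_def idx_def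
    by (rule finite_vimage_IntI[OF finite_atMost inj_on_to_nat_on[OF assms(3)]])
  moreover have "F n \<subseteq> D n" for n
    unfolding F_def by blast
  moreover have "\<forall>\<^sub>F n in sequentially. x \<in> st (F n) (\<U> n)" if "x \<in> A" for x
  proof -
    have "\<forall>\<^sub>F n in sequentially. f x n \<le> g n"
      using g that unfolding le_star_def by blast
    then show ?thesis
    proof (rule eventually_mono)
      fix n assume "f x n \<le> g n"
      with f[OF that, of n] obtain y where "y \<in> F n" "x \<in> st {y} (\<U> n)"
        unfolding F_def by fastforce
      then show "x \<in> st (F n) (\<U> n)"
        using st_mono[of "{y}" "F n" "\<U> n"] by blast
    qed
  qed
  ultimately show ?thesis
    by blast
qed

lemma extent_countable_imp_set_strongly_star_Hurewicz:
  assumes "t1_space X" and "less_than_b (topspace X)" and "extent_countable X"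
  shows "set_strongly_star_Hurewicz X"
  unfolding set_strongly_star_Hurewicz_def
proof (intro allI impI)
  fix A and \<U> :: "nat \<Rightarrow> 'a set set"
  assume A: "A \<noteq> {} \<and> A \<subseteq> topspace X \<and>
    (\<forall>n. (\<forall>U\<in>\<U> n. openin X U) \<and> X closure_of A \<subseteq> \<Union>(\<U> n))"
  let ?C = "X closure_of A"
  have "\<exists>D. D \<subseteq> ?C \<and> ?C \<subseteq> st D (\<U> n) \<and> closed_discrete X D" for n
  proof -
    have "\<forall>U\<in>\<U> n. openin X U" and "?C \<subseteq> \<Union>(\<U> n)"
      using A by auto
    then obtain D where "D \<subseteq> ?C" "?C \<subseteq> st D (\<U> n)" "closed_discrete X D"
      by (rule closed_discrete_star_kernel[OF assms(1) closedin_closure_of])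
    then show ?thesis
      by blast
  qed
  then obtain D where D: "\<And>n. D n \<subseteq> ?C" "\<And>n. ?C \<subseteq> st (D n) (\<U> n)"
    and "\<And>n. closed_discrete X (D n)"
    by metis
  then have "countable (D n)" for n
    using assms(3) unfolding extent_countable_def by blast
  moreover have "A \<subseteq> st (D n) (\<U> n)" for n
    using closure_of_subset[of A X] A D(2)[of n] by blast
  ultimately obtain F where "\<forall>n. finite (F n) \<and> F n \<subseteq> D n"
    and "\<forall>x\<in>A. \<forall>\<^sub>F n in sequentially. x \<in> st (F n) (\<U> n)"
    using finite_star_selection[OF assms(2), of A D \<U>] A by blast
  with D(1) show "\<exists>F. (\<forall>n. finite (F n) \<and> F n \<subseteq> ?C) \<and>
      (\<forall>x\<in>A. \<forall>\<^sub>F n in sequentially. x \<in> st (F n) (\<U> n))"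
    by blast
qed

theorem corollary4p1:
  fixes X :: "'a topology"
  assumes "t1_space X"
    and "less_than_b (topspace X)"
  shows "set_strongly_star_Hurewicz X \<longleftrightarrow> extent_countable X"
  using set_strongly_star_Hurewicz_imp_extent_countable
    extent_countable_imp_set_strongly_star_Hurewicz[OF assms]
  by blast

end
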